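(* Let $r\ge1$ and let $\lambda,\mu$ be pre-partitions of length at most $r$ with $\lambda\lhd\mu$. Then there exists a finite sequence of pre-partitions of length at most $r$, \[ \lambda=\nu^m\lhd\nu^{m-1}\lhd\cdots\lhd\nu^1\lhd\nu^0=\mu, \] such that for each $i$, $\nu^i$ is obtained from $\nu^{i-1}$ via a simple removal, an infinite removal, a slip, or a fall.
   Context: Let $\overline{\mathbb N}=\mathbb N\cup\{\infty\}$ with $\infty>n$ and $\infty+n=\infty$ for all $n$. A pre-partition of length at most $r$ is a non-increasing sequence $\lambda=(\lambda_1\ge\lambda_2\ge\dots\ge\lambda_r\ge0)$ in $\overline{\mathbb N}$ (all later terms being $0$). Co-domination: $\lambda\lhd\mu$ iff $\lambda_i+\lambda_{i+1}+\dots+\lambda_r\le\mu_i+\mu_{i+1}+\dots+\mu_r$ for all $i$. For pre-partitions $\lambda,\mu$: $\lambda$ is obtained from $\mu$ by a simple removal if, with $j$ the smallest index such that $\mu_j$ is finite, $\lambda_j=\mu_j-1$ and $\lambda_i=\mu_i$ for $i\ne j$; by an infinite removal if, with $j$ the largest index such that $\mu_j=\infty$, $\lambda_j<\mu_j=\infty$ and $\lambda_i=\mu_i$ for $i\ne j$; by a slip if for some $j\ge1$, $\lambda_{j+1}=\mu_{j+1}-1$, $\lambda_j=\mu_j+1$ and $\lambda_i=\mu_i$ for $i\notin\{j,j+1\}$; by a fall if for some $j<k$, $\lambda_k=\mu_k-1$, $\lambda_j=\mu_j+1$, $\lambda_i=\mu_i$ for $i\notin\{j,k\}$, and $\mu_i=\mu_{i'}$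 for all $i,i'\in\{j,\dots,k\}$. *)

theory Defs
  imports "HOL-Library.Extended_Nat"
begin

text \<open>A pre-partition of length at most r is represented by the list of its first r
  entries (indices are 0-based: list position i corresponds to the paper's index i+1;
  all later entries are implicitly 0).\<close>

definition prepartition :: "nat \<Rightarrow> enat list \<Rightarrow> bool" where
  "prepartition r xs \<longleftrightarrow> length xs = r \<and> sorted_wrt (\<lambda>a b. b \<le> a) xs"

definition codom :: "enat list \<Rightarrow> enat list \<Rightarrow> bool" where
  "codom l m \<longleftrightarrow> length l = length m \<and>
     (\<forall>i < length l. sum_list (drop i l) \<le> sum_list (drop i m))"

definition simple_removal :: "enat list \<Rightarrow> enat list \<Rightarrow> bool" where
  "simple_removal l m \<longleftrightarrow> length l = length m \<and>
     (\<exists>j < length m. m ! j \<noteq> \<infinity> \<and> (\<forall>i < j. m ! i = \<infinity>) \<and>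
        l ! j + 1 = m ! j \<and> (\<forall>i < length m. i \<noteq> j \<longrightarrow> l ! i = m ! i))"

definition infinite_removal :: "enat list \<Rightarrow> enat list \<Rightarrow> bool" where
  "infinite_removal l m \<longleftrightarrow> length l = length m \<and>
     (\<exists>j < length m. m ! j = \<infinity> \<and> (\<forall>i. j < i \<and> i < length m \<longrightarrow> m ! i \<noteq> \<infinity>) \<and>
        l ! j < m ! j \<and> (\<forall>i < length m. i \<noteq> j \<longrightarrow> l ! i = m ! i))"

definition slip :: "enat list \<Rightarrow> enat list \<Rightarrow> bool" where
  "slip l m \<longleftrightarrow> length l = length m \<and>
     (\<exists>j. j + 1 < length m \<and> l ! (j + 1) + 1 = m ! (j + 1) \<and> l ! j = m ! j + 1 \<and>
        (\<forall>i < length m. i \<noteq> j \<and> i \<noteq> j + 1 \<longrightarrow> l ! i = m ! i))"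

definition fall :: "enat list \<Rightarrow> enat list \<Rightarrow> bool" where
  "fall l m \<longleftrightarrow> length l = length m \<and>
     (\<exists>j k. j < k \<and> k < length m \<and> l ! k + 1 = m ! k \<and> l ! j = m ! j + 1 \<and>
        (\<forall>i < length m. i \<noteq> j \<and> i \<noteq> k \<longrightarrow> l ! i = m ! i) \<and>
        (\<forall>i i'. j \<le> i \<and> i \<le> k \<and> j \<le> i' \<and> i' \<le> k \<longrightarrow> m ! i = m ! i'))"

definition elementary_step :: "enat list \<Rightarrow> enat list \<Rightarrow> bool" where
  "elementary_step l m \<longleftrightarrow>
     simple_removal l m \<or> infinite_removal l m \<or> slip l m \<or> fall l m"

end

theory Submission
  imports Defs
begin

text \<open>
  Given \<open>\<lambda> \<lhd> \<mu>\<close> with \<open>\<lambda> \<noteq> \<mu>\<close>, one elementary step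
  turns \<open>\<mu>\<close> into some \<open>\<nu>\<close> with \<open>\<lambda> \<lhd> \<nu> \<lhd> \<mu>\<close> that is smaller in a well-founded order
  (fewer infinite entries, or the same infinite entries and smaller finite suffix sums);
  iterating gives the chain.

  If \<open>\<mu>\<close> is infinite at a position where \<open>\<lambda>\<close> is finite, an infinite removal at the last
  infinite entry of \<open>\<mu>\<close> replaces it by a large finite value. Otherwise let \<open>k\<close> be the last
  position where \<open>\<lambda>\<close> and \<open>\<mu>\<close> differ, so that \<open>\<lambda>\<^sub>k < \<mu>\<^sub>k\<close>. One unit is taken from the
  end of a block of equal entries of \<open>\<mu>\<close> and put at its start (a fall), or moved across a
  block boundary (a slip), or simply removed when all earlier entries are infinite. Such a
  move lowers the suffix sums of \<open>\<mu>\<close> by one exactly on an interval inside a block ending at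
  \<open>k\<close> or \<open>k - 1\<close>, and on that interval the suffix sums of \<open>\<lambda>\<close> are strictly smaller: if they
  were equal at some position \<open>n\<close>, then \<open>\<lambda>\<^sub>n \<le> \<lambda>\<^sub>n\<^sub>-\<^sub>1 \<le> \<mu>\<^sub>n\<^sub>-\<^sub>1 = \<mu>\<^sub>n\<close>, and the strict
  inequality at \<open>n + 1\<close> would give one at \<open>n\<close>.
\<close>

definition suffix_sum :: "enat list \<Rightarrow> nat \<Rightarrow> enat" where
  "suffix_sum xs i = sum_list (drop i xs)"

definition infinite_positions :: "enat list \<Rightarrow> nat set" where
  "infinite_positions xs = {i. i < length xs \<and> xs ! i = \<infinity>}"

lemma codom_iff_suffix_sum:
  "codom l m \<longleftrightarrow> length l = length m \<and> (\<forall>i. suffix_sum l i \<le> suffix_sum m i)"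
  unfolding codom_def suffix_sum_def by (metis drop_all linorder_not_le order_refl)

lemma suffix_sum_nth:
  "i < length xs \<Longrightarrow> suffix_sum xs i = xs ! i + suffix_sum xs (Suc i)"
  unfolding suffix_sum_def by (metis Cons_nth_drop_Suc sum_list.Cons)

lemma nth_le_suffix_sum:
  assumes "i \<le> j" "j < length xs"
  shows "xs ! j \<le> suffix_sum xs i"
  using elem_le_sum_list[of "j - i" "drop i xs"] assms unfolding suffix_sum_def by simp

lemma suffix_sum_eq_infinity_iff:
  "suffix_sum xs i = \<infinity> \<longleftrightarrow> (\<exists>j \<in> infinite_positions xs. i \<le> j)"
proof
  assume "suffix_sum xs i = \<infinity>"
  moreover have "sum_list ys = \<infinity> \<Longrightarrow> \<infinity> \<in> set ys" for ys :: "enat list"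
    by (induction ys) (auto simp: plus_eq_infty_iff_enat)
  ultimately have "\<infinity> \<in> set (drop i xs)"
    unfolding suffix_sum_def by blast
  then obtain q where "q < length (drop i xs)" "drop i xs ! q = \<infinity>"
    by (metis in_set_conv_nth)
  then show "\<exists>j \<in> infinite_positions xs. i \<le> j"
    unfolding infinite_positions_def by (intro bexI[of _ "i + q"]) auto
next
  assume "\<exists>j \<in> infinite_positions xs. i \<le> j"
  then obtain j where "i \<le> j" "j < length xs" "xs ! j = \<infinity>"
    unfolding infinite_positions_def by blast
  then show "suffix_sum xs i = \<infinity>"
    using nth_le_suffix_sum[of i j xs] by simp
qed

lemma suffix_sum_update_le:
  assumes "i \<le> s" "s < length xs"
  shows "suffix_sum (xs[s := x]) i + xs ! s = suffix_sum xs i + x"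
proof -
  have "sum_list (ys[k := x]) + ys ! k = sum_list ys + x" if "k < length ys" for ys :: "enat list" and k
    using that by (induction ys arbitrary: k) (auto simp: add_ac split: nat.split)
  from this[of "s - i" "drop i xs"] show ?thesis
    using assms unfolding suffix_sum_def by (simp add: drop_update_swap)
qed

lemma suffix_sum_update_gt: "s < i \<Longrightarrow> suffix_sum (xs[s := x]) i = suffix_sum xs i"
  unfolding suffix_sum_def by simp

lemma prepartition_length: "prepartition r xs \<Longrightarrow> length xs = r"
  unfolding prepartition_def by simp

lemma prepartition_nth_antimono:
  "prepartition r xs \<Longrightarrow> i \<le> j \<Longrightarrow> j < r \<Longrightarrow> xs ! j \<le> xs ! i"
  unfolding prepartition_def by (metis le_neq_implies_less order_refl sorted_wrt_nth_less)

lemma prepartition_infinite_prefix: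
  "prepartition r xs \<Longrightarrow> i \<le> j \<Longrightarrow> j < r \<Longrightarrow> xs ! j = \<infinity> \<Longrightarrow> xs ! i = \<infinity>"
  using prepartition_nth_antimono by (metis enat_ord_simps(5))

lemma prepartition_suffix_sum_eq_infinity_iff:
  "prepartition r xs \<Longrightarrow> suffix_sum xs i = \<infinity> \<longleftrightarrow> i < r \<and> xs ! i = \<infinity>"
  unfolding suffix_sum_eq_infinity_iff infinite_positions_def
  by (auto simp: prepartition_length intro: prepartition_infinite_prefix)

lemma prepartition_list_update:
  assumes "prepartition r xs" "j < r"
    and "0 < j \<Longrightarrow> x \<le> xs ! (j - 1)" and "Suc j < r \<Longrightarrow> xs ! Suc j \<le> x"
  shows "prepartition r (xs[j := x])"
  unfolding prepartition_def sorted_wrt_iff_nth_less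
proof (intro conjI allI impI)
  show "length (xs[j := x]) = r" using assms(1) by (simp add: prepartition_length)
  fix i i' assume ii': "i < i'" "i' < length (xs[j := x])"
  then have "i' < r" using assms(1) by (simp add: prepartition_length)
  consider "i = j" | "i' = j" | "i \<noteq> j" "i' \<noteq> j" by blast
  then show "xs[j := x] ! i' \<le> xs[j := x] ! i"
  proof cases
    case 1
    then show ?thesis
      using ii' \<open>i' < r\<close> assms(4) prepartition_nth_antimono[OF assms(1), of "Suc j" i']
      by (auto simp: prepartition_length[OF assms(1)])
  next
    case 2
    then show ?thesis
      using ii' \<open>i' < r\<close> assms(3) prepartition_nth_antimono[OF assms(1), of i "j - 1"]
      by (auto simp: prepartition_length[OF assms(1)] intro: order_trans)
  next
    case 3
    then show ?thesis using ii' \<open>i' < r\<close> prepartition_nth_antimono[OF assms(1), of i i'] by simp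
  qed
qed

lemma prepartition_block_start:
  assumes "prepartition r xs" "q < r"
  obtains b where "b \<le> q" "\<And>i. b \<le> i \<Longrightarrow> i \<le> q \<Longrightarrow> xs ! i = xs ! q"
    "b = 0 \<or> xs ! b < xs ! (b - 1)"
proof
  define b where "b = (LEAST i. xs ! i = xs ! q)"
  show "b \<le> q" unfolding b_def by (rule Least_le) simp
  have "xs ! b = xs ! q" unfolding b_def by (rule LeastI[of _ q]) simp
  then show "xs ! i = xs ! q" if "b \<le> i" "i \<le> q" for i
    using that assms prepartition_nth_antimono[OF assms(1)] \<open>b \<le> q\<close>
    by (metis order.antisym order.strict_trans1)
  have "xs ! (b - 1) \<noteq> xs ! q" if "b \<noteq> 0"
    using not_less_Least[of "b - 1" "\<lambda>i. xs ! i = xs ! q"] that unfolding b_def by simp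
  moreover have "xs ! b \<le> xs ! (b - 1)"
    using \<open>b \<le> q\<close> assms prepartition_nth_antimono[OF assms(1), of "b - 1" b] by simp
  ultimately show "b = 0 \<or> xs ! b < xs ! (b - 1)"
    using \<open>xs ! b = xs ! q\<close> by (metis order.not_eq_order_implies_strict)
qed

lemma suffix_sum_decrement:
  assumes "i \<le> s" "s < length xs" "xs ! s \<noteq> \<infinity>" "0 < xs ! s"
  shows "suffix_sum (xs[s := xs ! s - 1]) i + 1 = suffix_sum xs i"
proof -
  obtain n where n: "xs ! s = enat (Suc n)"
    using assms(3,4) by (cases "xs ! s") (auto simp: zero_enat_def gr0_conv_Suc)
  show ?thesis
    using suffix_sum_update_le[OF assms(1,2), of "xs ! s - 1"] n
    by (cases "suffix_sum (xs[s := xs ! s - 1]) i"; cases "suffix_sum xs i")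
      (auto simp: one_enat_def)
qed

lemma suffix_sum_increment:
  assumes "i \<le> t" "t < length xs" "xs ! t \<noteq> \<infinity>"
  shows "suffix_sum (xs[t := xs ! t + 1]) i = suffix_sum xs i + 1"
proof -
  have "xs ! t + suffix_sum (xs[t := xs ! t + 1]) i = xs ! t + (suffix_sum xs i + 1)"
    using suffix_sum_update_le[OF assms(1,2), of "xs ! t + 1"] by (simp add: ac_simps)
  then show ?thesis using assms(3) by (simp add: enat_add_left_cancel)
qed

lemma prepartition_decrement:
  assumes "prepartition r xs" "s < r" "Suc s < r \<Longrightarrow> xs ! Suc s < xs ! s"
  shows "prepartition r (xs[s := xs ! s - 1])"
proof (rule prepartition_list_update[OF assms(1,2)])
  show "xs ! s - 1 \<le> xs ! (s - 1)" if "0 < s"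
  proof -
    have "xs ! s - 1 \<le> xs ! s" by (cases "xs ! s") (simp_all add: one_enat_def)
    also have "\<dots> \<le> xs ! (s - 1)" using prepartition_nth_antimono[OF assms(1), of "s - 1" s] assms(2) by simp
    finally show ?thesis .
  qed
  show "xs ! Suc s \<le> xs ! s - 1" if "Suc s < r"
    using assms(3)[OF that] by (cases "xs ! s"; cases "xs ! Suc s") (auto simp: one_enat_def)
qed

lemma prepartition_increment:
  assumes "prepartition r xs" "t < r" "t = 0 \<or> xs ! t < xs ! (t - 1)"
  shows "prepartition r (xs[t := xs ! t + 1])"
proof (rule prepartition_list_update[OF assms(1,2)])
  show "xs ! t + 1 \<le> xs ! (t - 1)" if "0 < t"
    using assms(3) that by (metis ileI1 eSuc_plus_1 not_gr_zero)
  show "xs ! Suc t \<le> xs ! t + 1" if "Suc t < r"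
  proof -
    have "xs ! Suc t \<le> xs ! t" using prepartition_nth_antimono[OF assms(1), of t "Suc t"] that by simp
    also have "\<dots> \<le> xs ! t + 1" by (cases "xs ! t") (simp_all add: one_enat_def)
    finally show ?thesis .
  qed
qed

lemma unit_transfer:
  assumes pre: "prepartition r m" and ts: "t < s" "s < r"
    and fin: "m ! t \<noteq> \<infinity>" and pos: "0 < m ! s"
    and t_start: "t = 0 \<or> m ! t < m ! (t - 1)" and s_end: "Suc s < r \<Longrightarrow> m ! Suc s < m ! s"
  defines "l \<equiv> m[s := m ! s - 1, t := m ! t + 1]"
  shows "prepartition r l"
    and "\<And>i. t < i \<Longrightarrow> i \<le> s \<Longrightarrow> suffix_sum l i + 1 = suffix_sum m i"
    and "\<And>i. \<not> (t < i \<and> i \<le> s) \<Longrightarrow> suffix_sum l i = suffix_sum m i"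
    and "infinite_positions l = infinite_positions m"
proof -
  define m' where "m' = m[s := m ! s - 1]"
  have len: "length m = r" "length m' = r" using pre by (simp_all add: m'_def prepartition_length)
  have m'_t: "m' ! t = m ! t" using ts unfolding m'_def by simp
  have l_eq: "l = m'[t := m' ! t + 1]" unfolding l_def m'_def using ts by simp
  have fin_s: "m ! s \<noteq> \<infinity>"
    using prepartition_nth_antimono[OF pre, of t s] ts fin by (cases "m ! s") auto
  have pre': "prepartition r m'" unfolding m'_def by (rule prepartition_decrement[OF pre ts(2) s_end])
  have "t = 0 \<or> m' ! t < m' ! (t - 1)" using t_start ts unfolding m'_def by auto
  then show "prepartition r l" unfolding l_eq using prepartition_increment[OF pre'] ts by simp
  have dec: "suffix_sum m' i + 1 = suffix_sum m i" if "i \<le> s" for i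
    unfolding m'_def by (rule suffix_sum_decrement[OF that _ fin_s pos]) (use len ts in simp)
  have inc: "suffix_sum l i = suffix_sum m' i + 1" if "i \<le> t" for i
    unfolding l_eq by (rule suffix_sum_increment[OF that]) (use len ts m'_t fin in simp_all)
  show "suffix_sum l i + 1 = suffix_sum m i" if "t < i" "i \<le> s" for i
    using dec[OF that(2)] suffix_sum_update_gt[OF that(1)] unfolding l_eq by simp
  show "suffix_sum l i = suffix_sum m i" if "\<not> (t < i \<and> i \<le> s)" for i
  proof (cases "i \<le> t")
    case True then show ?thesis using inc dec ts by simp
  next
    case False
    then show ?thesis using that suffix_sum_update_gt[of s i m] suffix_sum_update_gt[of t i m']
      unfolding l_eq m'_def by simp
  qed
  show "infinite_positions l = infinite_positions m"
  proof -
    have "l ! i = \<infinity> \<longleftrightarrow> m ! i = \<infinity>" if "i < r" for i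
      using fin fin_s ts that len unfolding l_def
      by (cases "m ! s"; cases "m ! t") (auto simp: nth_list_update one_enat_def)
    then show ?thesis using len unfolding infinite_positions_def l_def by auto
  qed
qed

definition finite_part :: "enat \<Rightarrow> nat" where
  "finite_part x = (case x of enat n \<Rightarrow> n | \<infinity> \<Rightarrow> 0)"

definition descent_order :: "(enat list \<times> enat list) set" where
  "descent_order = measures [\<lambda>xs. card (infinite_positions xs),
     \<lambda>xs. \<Sum>i<length xs. finite_part (suffix_sum xs i)]"

lemma wf_descent_order: "wf descent_order"
  unfolding descent_order_def by simp

lemma descent_order_if_fewer_infinite:
  "card (infinite_positions l) < card (infinite_positions m) \<Longrightarrow> (l, m) \<in> descent_order"
  unfolding descent_order_def by simp

lemma descent_order_if_codom:
  assumes "codom l m" and same_inf: "infinite_positions l = infinite_positions m"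
    and strict: "suffix_sum l s < suffix_sum m s"
  shows "(l, m) \<in> descent_order"
proof -
  have len: "length l = length m" and le: "\<And>i. suffix_sum l i \<le> suffix_sum m i"
    using assms(1) by (auto simp: codom_iff_suffix_sum)
  have inf_iff: "suffix_sum l i = \<infinity> \<longleftrightarrow> suffix_sum m i = \<infinity>" for i
    using same_inf by (simp add: suffix_sum_eq_infinity_iff)
  have "finite_part (suffix_sum l i) \<le> finite_part (suffix_sum m i)" for i
    using le[of i] inf_iff[of i]
    by (cases "suffix_sum l i"; cases "suffix_sum m i") (auto simp: finite_part_def)
  moreover have "finite_part (suffix_sum l s) < finite_part (suffix_sum m s)"
    using strict inf_iff[of s]
    by (cases "suffix_sum l s"; cases "suffix_sum m s") (auto simp: finite_part_def)
  moreover have "s < length m"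
    using strict len by (metis drop_all not_le order_less_irrefl suffix_sum_def)
  ultimately have "(\<Sum>i<length m. finite_part (suffix_sum l i))
      < (\<Sum>i<length m. finite_part (suffix_sum m i))"
    by (intro sum_strict_mono_ex1) auto
  then show ?thesis unfolding descent_order_def using same_inf len by simp
qed

lemma codom_if_suffix_sums_lowered:
  assumes len: "length l = length m" and "codom lam m"
    and lowered: "\<And>i. i \<in> A \<Longrightarrow> suffix_sum l i + 1 = suffix_sum m i \<and> suffix_sum lam i < suffix_sum m i"
    and kept: "\<And>i. i \<notin> A \<Longrightarrow> suffix_sum l i = suffix_sum m i"
  shows "codom lam l" "codom l m"
proof -
  have lam_le: "suffix_sum lam i \<le> suffix_sum m i" for i
    using \<open>codom lam m\<close> by (simp add: codom_iff_suffix_sum)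
  have "suffix_sum lam i \<le> suffix_sum l i \<and> suffix_sum l i \<le> suffix_sum m i" for i
  proof (cases "i \<in> A")
    case True
    with lowered[of i] show ?thesis
      by (cases "suffix_sum l i"; cases "suffix_sum m i"; cases "suffix_sum lam i")
        (auto simp: one_enat_def)
  qed (use kept lam_le in simp)
  then show "codom lam l" "codom l m"
    using len \<open>codom lam m\<close> by (auto simp: codom_iff_suffix_sum)
qed

definition step_towards :: "nat \<Rightarrow> enat list \<Rightarrow> enat list \<Rightarrow> enat list \<Rightarrow> bool" where
  "step_towards r lam l m \<longleftrightarrow> prepartition r l \<and> codom lam l \<and> codom l m \<and>
     elementary_step l m \<and> (l, m) \<in> descent_order"

lemma unit_transfer_descends:
  assumes pre: "prepartition r m" and "codom lam m" and ts: "t < s" "s < r"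
    and fin: "m ! t \<noteq> \<infinity>" and pos: "0 < m ! s"
    and t_start: "t = 0 \<or> m ! t < m ! (t - 1)" and s_end: "Suc s < r \<Longrightarrow> m ! Suc s < m ! s"
    and strict: "\<And>i. t < i \<Longrightarrow> i \<le> s \<Longrightarrow> suffix_sum lam i < suffix_sum m i"
  defines "l \<equiv> m[s := m ! s - 1, t := m ! t + 1]"
  shows "prepartition r l" "codom lam l" "codom l m" "(l, m) \<in> descent_order"
proof -
  note transfer = unit_transfer[OF pre ts fin pos t_start s_end, folded l_def]
  show "prepartition r l" by (rule transfer(1))
  have len: "length l = length m" using transfer(1) pre by (simp add: prepartition_length)
  show "codom lam l" "codom l m"
    using codom_if_suffix_sums_lowered[OF len \<open>codom lam m\<close>, of "{t<..s}"] transfer strict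
    by auto
  have "m ! s \<noteq> \<infinity>" using prepartition_nth_antimono[OF pre, of t s] ts fin by (cases "m ! s") auto
  then have "suffix_sum m s \<noteq> \<infinity>" using prepartition_suffix_sum_eq_infinity_iff[OF pre] by simp
  then have "suffix_sum l s < suffix_sum m s"
    using transfer(2)[of s] ts by (cases "suffix_sum l s") (auto simp: one_enat_def)
  then show "(l, m) \<in> descent_order"
    using descent_order_if_codom \<open>codom l m\<close> transfer(4) by blast
qed

lemma transfer_is_fall:
  assumes "t < s" "s < length m" "m ! s \<noteq> \<infinity>" "0 < m ! s"
    and "\<And>i. t \<le> i \<Longrightarrow> i \<le> s \<Longrightarrow> m ! i = m ! s"
  shows "fall (m[s := m ! s - 1, t := m ! t + 1]) m"
  unfolding fall_def
proof (rule conjI[OF _ exI[of _ t]], simp, rule exI[of _ s], intro conjI)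
  show "m[s := m ! s - 1, t := m ! t + 1] ! s + 1 = m ! s"
    using assms(1-4) by (cases "m ! s") (auto simp: one_enat_def zero_enat_def)
  show "\<forall>i i'. t \<le> i \<and> i \<le> s \<and> t \<le> i' \<and> i' \<le> s \<longrightarrow> m ! i = m ! i'"
    using assms(5) by metis
qed (use assms(1,2) in auto)

lemma transfer_is_slip:
  assumes "Suc t < length m" "m ! Suc t \<noteq> \<infinity>" "0 < m ! Suc t"
  shows "slip (m[Suc t := m ! Suc t - 1, t := m ! t + 1]) m"
  unfolding slip_def
proof (intro conjI exI[of _ t])
  show "m[Suc t := m ! Suc t - 1, t := m ! t + 1] ! (t + 1) + 1 = m ! (t + 1)"
    using assms by (cases "m ! Suc t") (auto simp: one_enat_def zero_enat_def)
qed (use assms in \<open>auto simp: nth_list_update\<close>)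

lemma fall_step_towards:
  assumes "prepartition r m" "codom lam m" "t < s" "s < r" "m ! s \<noteq> \<infinity>" "0 < m ! s"
    and "t = 0 \<or> m ! t < m ! (t - 1)" "Suc s < r \<Longrightarrow> m ! Suc s < m ! s"
    and block: "\<And>i. t \<le> i \<Longrightarrow> i \<le> s \<Longrightarrow> m ! i = m ! s"
    and "\<And>i. t < i \<Longrightarrow> i \<le> s \<Longrightarrow> suffix_sum lam i < suffix_sum m i"
  shows "\<exists>l. step_towards r lam l m"
proof -
  have "m ! t \<noteq> \<infinity>" using block[of t] assms(3,5) by simp
  note descends = unit_transfer_descends[OF assms(1-4) this assms(6-8,10)]
  have "fall (m[s := m ! s - 1, t := m ! t + 1]) m"
    using transfer_is_fall[OF assms(3) _ assms(5,6) block] assms(1,4) by (simp add: prepartition_length)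
  with descends show ?thesis unfolding step_towards_def elementary_step_def by blast
qed

lemma slip_step_towards:
  assumes "prepartition r m" "codom lam m" "Suc t < r" "m ! t \<noteq> \<infinity>" "0 < m ! Suc t"
    and "t = 0 \<or> m ! t < m ! (t - 1)" "Suc (Suc t) < r \<Longrightarrow> m ! Suc (Suc t) < m ! Suc t"
    and strict: "suffix_sum lam (Suc t) < suffix_sum m (Suc t)"
  shows "\<exists>l. step_towards r lam l m"
proof -
  have "suffix_sum lam i < suffix_sum m i" if "t < i" "i \<le> Suc t" for i
    using that strict by (metis Suc_leI le_antisym)
  note descends = unit_transfer_descends[OF assms(1,2) lessI assms(3-7) this]
  have "m ! Suc t \<noteq> \<infinity>"
    using prepartition_nth_antimono[OF assms(1), of t "Suc t"] assms(3,4) by (cases "m ! Suc t") auto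
  then have "slip (m[Suc t := m ! Suc t - 1, t := m ! t + 1]) m"
    using assms(1,3,5) by (intro transfer_is_slip) (auto simp: prepartition_length)
  with descends show ?thesis unfolding step_towards_def elementary_step_def by blast
qed

lemma decrement_is_simple_removal:
  assumes "s < length m" "m ! s \<noteq> \<infinity>" "0 < m ! s" "\<And>i. i < s \<Longrightarrow> m ! i = \<infinity>"
  shows "simple_removal (m[s := m ! s - 1]) m"
  unfolding simple_removal_def
proof (rule conjI[OF _ exI[of _ s]], simp, intro conjI)
  show "m[s := m ! s - 1] ! s + 1 = m ! s"
    using assms(1-3) by (cases "m ! s") (auto simp: one_enat_def zero_enat_def)
qed (use assms in auto)

lemma simple_removal_step_towards:
  assumes pre: "prepartition r m" and "codom lam m" and sr: "s < r"
    and fin: "m ! s \<noteq> \<infinity>" and pos: "0 < m ! s" and s_end: "Suc s < r \<Longrightarrow> m ! Suc s < m ! s"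
    and inf_before: "\<And>i. i < s \<Longrightarrow> m ! i = \<infinity>"
    and strict: "suffix_sum lam s < suffix_sum m s"
  shows "\<exists>l. step_towards r lam l m"
proof -
  define l where "l = m[s := m ! s - 1]"
  have pre_l: "prepartition r l" unfolding l_def by (rule prepartition_decrement[OF pre sr s_end])
  have len: "length l = r" "length m = r" using pre_l pre by (simp_all add: prepartition_length)
  have dec: "suffix_sum l i + 1 = suffix_sum m i" if "i \<le> s" for i
    unfolding l_def by (rule suffix_sum_decrement[OF that _ fin pos]) (use len sr in simp)
  have kept: "suffix_sum l i = suffix_sum m i" if "i \<noteq> s" for i
  proof (cases "i < s")
    case True
    then have "l ! i = \<infinity>" "m ! i = \<infinity>" using inf_before sr len unfolding l_def by auto
    with True sr have "suffix_sum l i = \<infinity>" "suffix_sum m i = \<infinity>"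
      using prepartition_suffix_sum_eq_infinity_iff[OF pre_l, of i]
        prepartition_suffix_sum_eq_infinity_iff[OF pre, of i] by simp_all
    then show ?thesis by simp
  next
    case False
    then show ?thesis using that suffix_sum_update_gt[of s i m] unfolding l_def by simp
  qed
  have codoms: "codom lam l" "codom l m"
    using codom_if_suffix_sums_lowered[OF _ \<open>codom lam m\<close>, of l "{s}"] len dec kept strict by auto
  have "suffix_sum m s \<noteq> \<infinity>" using fin prepartition_suffix_sum_eq_infinity_iff[OF pre] by simp
  then have "suffix_sum l s < suffix_sum m s"
    using dec[of s] by (cases "suffix_sum l s") (auto simp: one_enat_def)
  moreover have "infinite_positions l = infinite_positions m"
  proof -
    have "l ! i = \<infinity> \<longleftrightarrow> m ! i = \<infinity>" if "i < r" for i
      using fin len that unfolding l_def by (cases "i = s"; cases "m ! s") (auto simp: one_enat_def)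
    then show ?thesis using len unfolding infinite_positions_def by auto
  qed
  ultimately have "(l, m) \<in> descent_order" using descent_order_if_codom codoms(2) by blast
  moreover have "simple_removal l m"
    unfolding l_def using decrement_is_simple_removal fin pos inf_before sr len by simp
  ultimately show ?thesis
    using pre_l codoms unfolding step_towards_def elementary_step_def by blast
qed

lemma suffix_sum_strict_on_block:
  assumes pre_lam: "prepartition r lam" and pre: "prepartition r m" and "codom lam m"
    and sr: "s < r" and strict_s: "suffix_sum lam s < suffix_sum m s"
    and block: "\<And>i. t \<le> i \<Longrightarrow> i < s \<Longrightarrow> m ! i = m ! t" and fin: "m ! t \<noteq> \<infinity>"
    and "t < i" "i \<le> s"
  shows "suffix_sum lam i < suffix_sum m i"
  using \<open>i \<le> s\<close> \<open>t < i\<close>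
proof (induction i rule: inc_induct)
  case base
  show ?case by (rule strict_s)
next
  case (step n)
  have n: "n < r" "Suc (n - 1) = n" "n - 1 < r" using step.hyps sr \<open>t < n\<close> by auto
  have strict_Suc: "suffix_sum lam (Suc n) < suffix_sum m (Suc n)" using step.IH \<open>t < n\<close> by simp
  have m_n: "m ! (n - 1) = m ! n" "m ! n \<noteq> \<infinity>" using block[of "n - 1"] block[of n] step.hyps \<open>t < n\<close> fin by auto
  have len: "length lam = r" "length m = r" using pre_lam pre by (simp_all add: prepartition_length)
  have le: "\<And>i. suffix_sum lam i \<le> suffix_sum m i" using \<open>codom lam m\<close> by (simp add: codom_iff_suffix_sum)
  show ?case
  proof (rule ccontr)
    assume "\<not> ?case"
    then have eq: "suffix_sum lam n = suffix_sum m n" using le[of n] by simp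
    have fin_n: "suffix_sum m n \<noteq> \<infinity>" using m_n(2) prepartition_suffix_sum_eq_infinity_iff[OF pre] by simp
    have "suffix_sum m n + lam ! (n - 1) \<le> suffix_sum m n + m ! n"
      using le[of "n - 1"] suffix_sum_nth[of "n - 1" lam] suffix_sum_nth[of "n - 1" m] n len eq m_n(1)
      by (simp add: add.commute)
    then have "lam ! n \<le> m ! n"
      using fin_n prepartition_nth_antimono[OF pre_lam, of "n - 1" n] n by (simp add: enat_add_left_cancel_le)
    then have "lam ! n + suffix_sum lam (Suc n) \<le> m ! n + suffix_sum lam (Suc n)" by (rule add_right_mono)
    also have "\<dots> < m ! n + suffix_sum m (Suc n)"
      using strict_Suc m_n(2) by (simp add: enat_add_left_cancel_less)
    finally show False using eq suffix_sum_nth n(1) len by simp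
  qed
qed

lemma last_differing_position:
  assumes pre_lam: "prepartition r lam" and pre: "prepartition r m" and "codom lam m"
    and "lam \<noteq> m" and inf_kept: "\<And>j. j < r \<Longrightarrow> m ! j = \<infinity> \<Longrightarrow> lam ! j = \<infinity>"
  obtains k where "k < r" "m ! k \<noteq> \<infinity>" "0 < m ! k"
    "suffix_sum lam k < suffix_sum m k" "Suc k < r \<Longrightarrow> m ! Suc k < m ! k"
proof -
  have len: "length lam = r" "length m = r" using pre_lam pre by (simp_all add: prepartition_length)
  define D where "D = {i. i < r \<and> lam ! i \<noteq> m ! i}"
  have "finite D" unfolding D_def by simp
  have "\<exists>i<r. lam ! i \<noteq> m ! i" using \<open>lam \<noteq> m\<close> len by (metis nth_equalityI)
  then have "D \<noteq> {}" unfolding D_def by blast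
  define k where "k = Max D"
  have "k \<in> D" unfolding k_def using \<open>finite D\<close> \<open>D \<noteq> {}\<close> by (rule Max_in)
  then have kr: "k < r" and lam_k: "lam ! k \<noteq> m ! k" unfolding D_def by auto
  have above: "lam ! i = m ! i" if "k < i" "i < r" for i
  proof (rule ccontr)
    assume "lam ! i \<noteq> m ! i"
    then have "i \<le> k" unfolding k_def using \<open>finite D\<close> that(2) by (simp add: D_def)
    then show False using that(1) by simp
  qed
  have fin_k: "m ! k \<noteq> \<infinity>" using inf_kept[OF kr] lam_k by metis
  have "drop (Suc k) lam = drop (Suc k) m" using above len by (intro nth_equalityI) auto
  then have tail: "suffix_sum lam (Suc k) = suffix_sum m (Suc k)" unfolding suffix_sum_def by simp
  have "suffix_sum m (Suc k) \<noteq> \<infinity>"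
    using fin_k prepartition_suffix_sum_eq_infinity_iff[OF pre, of "Suc k"]
      prepartition_infinite_prefix[OF pre, of k "Suc k"] by auto
  then obtain c where c: "suffix_sum m (Suc k) = enat c" by auto
  have sums: "suffix_sum lam k = enat c + lam ! k" "suffix_sum m k = enat c + m ! k"
    using suffix_sum_nth[of k lam] suffix_sum_nth[of k m] kr len tail c by (simp_all add: add.commute)
  have "enat c + lam ! k \<le> enat c + m ! k"
    using \<open>codom lam m\<close> sums by (metis codom_iff_suffix_sum)
  then have lt_k: "lam ! k < m ! k" using lam_k by simp
  show ?thesis
  proof
    show "k < r" "m ! k \<noteq> \<infinity>" by (fact kr, fact fin_k)
    show "0 < m ! k" using lt_k by (metis le_less_trans zero_le)
    show "suffix_sum lam k < suffix_sum m k" using lt_k sums by simp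
    show "m ! Suc k < m ! k" if "Suc k < r"
      using above[of "Suc k"] prepartition_nth_antimono[OF pre_lam, of k "Suc k"] lt_k that by simp
  qed
qed

lemma prepartition_last_infinite:
  assumes pre: "prepartition r m" and "j0 < r" "m ! j0 = \<infinity>"
  obtains j where "j0 \<le> j" "j < r" "\<And>i. i \<le> j \<Longrightarrow> m ! i = \<infinity>"
    "\<And>i. j < i \<Longrightarrow> i < r \<Longrightarrow> m ! i \<noteq> \<infinity>"
proof
  have len: "length m = r" using pre by (simp add: prepartition_length)
  have fin_inf: "finite (infinite_positions m)" unfolding infinite_positions_def by simp
  have j0_inf: "j0 \<in> infinite_positions m" using assms(2,3) len unfolding infinite_positions_def by simp
  define j where "j = Max (infinite_positions m)"
  have "j \<in> infinite_positions m" unfolding j_def using fin_inf j0_inf Max_in by blast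
  then have jr: "j < r" and m_j: "m ! j = \<infinity>" using len unfolding infinite_positions_def by auto
  then show "j < r" by simp
  show "j0 \<le> j" unfolding j_def using fin_inf j0_inf by simp
  show "m ! i = \<infinity>" if "i \<le> j" for i
    using prepartition_infinite_prefix[OF pre that jr m_j] .
  show "m ! i \<noteq> \<infinity>" if "j < i" "i < r" for i
  proof
    assume "m ! i = \<infinity>"
    then have "i \<in> infinite_positions m" using that len unfolding infinite_positions_def by simp
    then show False using Max_ge[OF fin_inf] that(1) unfolding j_def by fastforce
  qed
qed

lemma update_is_infinite_removal:
  assumes "j < length m" "m ! j = \<infinity>" "\<And>i. j < i \<Longrightarrow> i < length m \<Longrightarrow> m ! i \<noteq> \<infinity>"
    and "v \<noteq> \<infinity>"
  shows "infinite_removal (m[j := v]) m"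
  unfolding infinite_removal_def using assms by (intro conjI exI[of _ j]) auto

lemma infinite_removal_step_towards:
  assumes pre_lam: "prepartition r lam" and pre: "prepartition r m" and "codom lam m"
    and "j0 < r" "m ! j0 = \<infinity>" "lam ! j0 \<noteq> \<infinity>"
  shows "\<exists>l. step_towards r lam l m"
proof -
  obtain j where "j0 \<le> j" and jr: "j < r" and inf_upto: "\<And>i. i \<le> j \<Longrightarrow> m ! i = \<infinity>"
    and fin_after: "\<And>i. j < i \<Longrightarrow> i < r \<Longrightarrow> m ! i \<noteq> \<infinity>"
    using prepartition_last_infinite[OF pre assms(4,5)] by blast
  have len: "length lam = r" "length m = r" using pre_lam pre by (simp_all add: prepartition_length)
  have "lam ! j \<noteq> \<infinity>"
    using prepartition_infinite_prefix[OF pre_lam \<open>j0 \<le> j\<close> jr] assms(6) by blast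
  then have "suffix_sum lam j \<noteq> \<infinity>" "suffix_sum m (Suc j) \<noteq> \<infinity>"
    using prepartition_suffix_sum_eq_infinity_iff[OF pre_lam, of j]
      prepartition_suffix_sum_eq_infinity_iff[OF pre, of "Suc j"] fin_after by auto
  \<comment> \<open>any finite value dominating both \<open>suffix_sum lam j\<close> and \<open>m ! Suc j\<close> would do\<close>
  define v where "v = suffix_sum lam j + suffix_sum m (Suc j)"
  have v_fin: "v \<noteq> \<infinity>"
    unfolding v_def using \<open>suffix_sum lam j \<noteq> \<infinity>\<close> \<open>suffix_sum m (Suc j) \<noteq> \<infinity>\<close>
    by (simp add: plus_eq_infty_iff_enat)
  define l where "l = m[j := v]"
  have "m ! Suc j \<le> suffix_sum m (Suc j)" if "Suc j < r"
    using nth_le_suffix_sum[of "Suc j" "Suc j" m] that len by simp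
  moreover have "suffix_sum m (Suc j) \<le> v" unfolding v_def by simp
  ultimately have "m ! Suc j \<le> v" if "Suc j < r" using that by (blast intro: order_trans)
  then have pre_l: "prepartition r l"
    unfolding l_def using inf_upto by (intro prepartition_list_update[OF pre jr]) auto
  have sums: "suffix_sum lam i \<le> suffix_sum l i \<and> suffix_sum l i \<le> suffix_sum m i" for i
  proof (cases "j < i")
    case True
    then show ?thesis using \<open>codom lam m\<close> suffix_sum_update_gt[OF True, of m v]
      unfolding l_def by (simp add: codom_iff_suffix_sum)
  next
    case False
    have "suffix_sum l j = v + suffix_sum m (Suc j)"
      using suffix_sum_nth[of j l] suffix_sum_update_gt[of j "Suc j" m v] jr len unfolding l_def by simp
    then have "suffix_sum lam j \<le> suffix_sum l j" unfolding v_def by (simp add: add.assoc)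
    moreover have "suffix_sum m i = \<infinity>" "i < j \<Longrightarrow> suffix_sum l i = \<infinity>"
      using False inf_upto jr len prepartition_suffix_sum_eq_infinity_iff[OF pre, of i]
        prepartition_suffix_sum_eq_infinity_iff[OF pre_l, of i] unfolding l_def by auto
    ultimately show ?thesis using False by (cases "i = j") auto
  qed
  then have codoms: "codom lam l" "codom l m"
    using pre_l len by (simp_all add: codom_iff_suffix_sum prepartition_length)
  have "infinite_positions l = infinite_positions m - {j}"
    using v_fin jr len unfolding infinite_positions_def l_def by (auto simp: nth_list_update)
  moreover have "j \<in> infinite_positions m" using inf_upto[of j] jr len by (simp add: infinite_positions_def)
  ultimately have "(l, m) \<in> descent_order"
    using card_Diff1_less[of "infinite_positions m" j] descent_order_if_fewer_infinite[of l m]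
    by (simp add: infinite_positions_def)
  moreover have "infinite_removal l m"
    unfolding l_def using update_is_infinite_removal inf_upto fin_after jr v_fin len by simp
  ultimately show ?thesis unfolding step_towards_def elementary_step_def using pre_l codoms by blast
qed

lemma block_start_step_towards:
  assumes pre_lam: "prepartition r lam" and pre: "prepartition r m" and "codom lam m"
    and kr: "k < r" and "0 < k" and fin: "m ! (k - 1) \<noteq> \<infinity>" and k_start: "m ! k < m ! (k - 1)"
    and pos_k: "0 < m ! k" and k_end: "Suc k < r \<Longrightarrow> m ! Suc k < m ! k"
    and strict_k: "suffix_sum lam k < suffix_sum m k"
  shows "\<exists>l. step_towards r lam l m"
proof -
  have k1: "k - 1 < r" "Suc (k - 1) = k" using kr \<open>0 < k\<close> by auto
  obtain t where "t \<le> k - 1" and t_block: "\<And>i. t \<le> i \<Longrightarrow> i \<le> k - 1 \<Longrightarrow> m ! i = m ! (k - 1)"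
    and t_start: "t = 0 \<or> m ! t < m ! (t - 1)"
    using prepartition_block_start[OF pre k1(1)] by blast
  then consider (slip) "t = k - 1" | (fall) "t < k - 1" by linarith
  then show ?thesis
  proof cases
    case slip
    from slip_step_towards[of r m lam "k - 1", unfolded k1(2),
        OF pre \<open>codom lam m\<close> kr fin pos_k t_start[unfolded slip] k_end strict_k]
    show ?thesis .
  next
    case fall
    have pos: "0 < m ! (k - 1)" using k_start by (metis le_less_trans zero_le)
    have "m ! i = m ! t" if "t \<le> i" "i < k" for i
      using t_block[of i] t_block[of t] that \<open>t \<le> k - 1\<close> by simp
    moreover have "m ! t \<noteq> \<infinity>" using t_block[of t] \<open>t \<le> k - 1\<close> fin by simp
    ultimately have "suffix_sum lam i < suffix_sum m i" if "t < i" "i \<le> k - 1" for i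
      using suffix_sum_strict_on_block[OF pre_lam pre \<open>codom lam m\<close> kr strict_k, of t i] that
      by (meson diff_le_self order_trans)
    moreover have "Suc (k - 1) < r \<Longrightarrow> m ! Suc (k - 1) < m ! (k - 1)" using k_start k1(2) by simp
    ultimately show ?thesis
      using fall_step_towards[OF pre \<open>codom lam m\<close> fall k1(1) fin pos t_start _ t_block] by blast
  qed
qed

lemma finite_step_towards:
  assumes pre_lam: "prepartition r lam" and pre: "prepartition r m" and "codom lam m"
    and "lam \<noteq> m" and inf_kept: "\<And>j. j < r \<Longrightarrow> m ! j = \<infinity> \<Longrightarrow> lam ! j = \<infinity>"
  shows "\<exists>l. step_towards r lam l m"
proof -
  obtain k where kr: "k < r" and fin_k: "m ! k \<noteq> \<infinity>" and pos_k: "0 < m ! k"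
    and strict_k: "suffix_sum lam k < suffix_sum m k" and k_end: "Suc k < r \<Longrightarrow> m ! Suc k < m ! k"
    using last_differing_position[OF assms] by blast
  obtain p where "p \<le> k" and p_block: "\<And>i. p \<le> i \<Longrightarrow> i \<le> k \<Longrightarrow> m ! i = m ! k"
    and p_start: "p = 0 \<or> m ! p < m ! (p - 1)"
    using prepartition_block_start[OF pre kr] by blast
  consider (fall) "p < k" | (removal) "p = k" "k = 0 \<or> m ! (k - 1) = \<infinity>"
    | (block_start) "p = k" "0 < k" "m ! (k - 1) \<noteq> \<infinity>"
    using \<open>p \<le> k\<close> by linarith
  then show ?thesis
  proof cases
    case fall
    have "m ! i = m ! p" if "p \<le> i" "i < k" for i
      using p_block[of i] p_block[of p] that \<open>p \<le> k\<close> by simp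
    moreover have "m ! p \<noteq> \<infinity>" using p_block[of p] \<open>p \<le> k\<close> fin_k by simp
    ultimately have "suffix_sum lam i < suffix_sum m i" if "p < i" "i \<le> k" for i
      using suffix_sum_strict_on_block[OF pre_lam pre \<open>codom lam m\<close> kr strict_k, of p i] that by blast
    with fall show ?thesis
      by (intro fall_step_towards[OF pre \<open>codom lam m\<close> _ kr fin_k pos_k p_start k_end p_block])
  next
    case removal
    have "m ! i = \<infinity>" if "i < k" for i
      using removal that prepartition_infinite_prefix[OF pre, of i "k - 1"] kr by auto
    from simple_removal_step_towards[OF pre \<open>codom lam m\<close> kr fin_k pos_k k_end this strict_k]
    show ?thesis .
  next
    case block_start
    then have "m ! k < m ! (k - 1)" using p_start by simp
    with block_start show ?thesis
      using block_start_step_towards[OF pre_lam pre \<open>codom lam m\<close> kr] pos_k k_end strict_k by blast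
  qed
qed

lemma exists_step_towards:
  assumes "prepartition r lam" "prepartition r m" "codom lam m" "lam \<noteq> m"
  shows "\<exists>l. step_towards r lam l m"
proof (cases "\<exists>j<r. m ! j = \<infinity> \<and> lam ! j \<noteq> \<infinity>")
  case True
  then show ?thesis using infinite_removal_step_towards[OF assms(1-3)] by blast
next
  case False
  then show ?thesis using finite_step_towards[OF assms] by blast
qed

definition elementary_chain :: "nat \<Rightarrow> enat list list \<Rightarrow> bool" where
  "elementary_chain r nus \<longleftrightarrow> (\<forall>nu \<in> set nus. prepartition r nu) \<and>
     (\<forall>i. i + 1 < length nus \<longrightarrow>
        codom (nus ! (i + 1)) (nus ! i) \<and> elementary_step (nus ! (i + 1)) (nus ! i))"

lemma elementary_chain_Cons:
  assumes "elementary_chain r nus" "nus \<noteq> []" "prepartition r m"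
    and "codom (hd nus) m" "elementary_step (hd nus) m"
  shows "elementary_chain r (m # nus)"
  unfolding elementary_chain_def
proof (intro conjI allI impI)
  show "\<forall>nu \<in> set (m # nus). prepartition r nu" using assms(1,3) by (simp add: elementary_chain_def)
  fix i assume "i + 1 < length (m # nus)"
  then show "codom ((m # nus) ! (i + 1)) ((m # nus) ! i)"
    "elementary_step ((m # nus) ! (i + 1)) ((m # nus) ! i)"
    using assms by (cases i; auto simp: elementary_chain_def hd_conv_nth)+
qed

lemma elementary_chain_exists:
  assumes "prepartition r lam"
  shows "prepartition r m \<Longrightarrow> codom lam m \<Longrightarrow>
    \<exists>nus. nus \<noteq> [] \<and> hd nus = m \<and> last nus = lam \<and> elementary_chain r nus"
proof (induction m rule: wf_induct_rule[OF wf_descent_order])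
  case (1 m)
  show ?case
  proof (cases "lam = m")
    case True
    then show ?thesis using "1.prems" by (intro exI[of _ "[m]"]) (simp add: elementary_chain_def)
  next
    case False
    then obtain l where l: "step_towards r lam l m"
      using exists_step_towards[OF assms "1.prems"] by blast
    then obtain nus where "nus \<noteq> []" "hd nus = l" "last nus = lam" "elementary_chain r nus"
      using "1.IH" unfolding step_towards_def by blast
    then show ?thesis
      using l "1.prems" elementary_chain_Cons[of r nus m] unfolding step_towards_def
      by (intro exI[of _ "m # nus"]) auto
  qed
qed

theorem theorem2p1:
  fixes r :: nat and lam mu :: "enat list"
  assumes "r \<ge> 1"
    and "prepartition r lam" and "prepartition r mu"
    and "codom lam mu"
  shows "\<exists>nus :: enat list list. nus \<noteq> [] \<and> hd nus = mu \<and> last nus = lam \<and>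
           (\<forall>nu \<in> set nus. prepartition r nu) \<and>
           (\<forall>i. i + 1 < length nus \<longrightarrow>
              codom (nus ! (i + 1)) (nus ! i) \<and> elementary_step (nus ! (i + 1)) (nus ! i))"
  using elementary_chain_exists[OF assms(2-4)] unfolding elementary_chain_def .

end
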